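(* Let $f\in C^1([0,1])$ satisfy $f(0)=f(1)=0$, $f(u)>0$ for $u\in(0,1)$, $f'(0)>0$, $f(u)\leqslant f'(0)u$ for $u\in(0,1)$. For $a>0$ and $b<0$ let $k(x)=\frac{1}{a-b}$ for $x\in[b,a]$ and $k(x)=0$ otherwise, let $r=\frac{a+b}{a-b}\in(-1,1)$, and let $c_l^*,c_r^*$ be as in the context. If $f'(0)\geqslant1$, then $c_l^*<0<c_r^*$. If $f'(0)<1$, there exists a constant $r^*>0$ (depending only on $f'(0)$) such that: (i) if $r>r^*$, then $0<c_l^*<c_r^*$; (ii) if $r=r^*$, then $0=c_l^*<c_r^*$; (iii) if $-r^*<r<r^*$, then $c_l^*<0<c_r^*$; (iv) if $r=-r^*$, then $c_l^*<c_r^*=0$; (v) if $r<-r^*$, then $c_l^*<c_r^*<0$.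
   Context: $c_l^*=\sup_{\lambda<0}\{\lambda^{-1}[\int_{\mathbb R}k(x)e^{\lambda x}dx-1+f'(0)]\}$ and $c_r^*=\inf_{\lambda>0}\{\lambda^{-1}[\int_{\mathbb R}k(x)e^{\lambda x}dx-1+f'(0)]\}$ are the spreading speeds to the left and right of $u_t=\int_{\mathbb R}k(x-y)u(t,y)dy-u+f(u)$. *)

theory Defs
  imports "HOL-Analysis.Analysis"
begin

definition unif_kernel :: "real \<Rightarrow> real \<Rightarrow> real \<Rightarrow> real" where
  "unif_kernel a b x = (if b \<le> x \<and> x \<le> a then 1 / (a - b) else 0)"

text \<open>Left spreading speed: sup over lambda < 0 of
  lambda^-1 [ integral k(x) e^(lambda x) dx - 1 + f'(0) ], with s = f'(0).\<close>
definition c_left :: "(real \<Rightarrow> real) \<Rightarrow> real \<Rightarrow> real" where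
  "c_left k s = Sup {(integral UNIV (\<lambda>x. k x * exp (l * x)) - 1 + s) / l | l. l < 0}"

definition c_right :: "(real \<Rightarrow> real) \<Rightarrow> real \<Rightarrow> real" where
  "c_right k s = Inf {(integral UNIV (\<lambda>x. k x * exp (l * x)) - 1 + s) / l | l. l > 0}"

definition kpp_nonlin :: "(real \<Rightarrow> real) \<Rightarrow> (real \<Rightarrow> real) \<Rightarrow> bool" where
  "kpp_nonlin f f' \<longleftrightarrow>
     continuous_on {0..1} f' \<and>
     (\<forall>x\<in>{0..1}. (f has_real_derivative f' x) (at x within {0..1})) \<and>
     f 0 = 0 \<and> f 1 = 0 \<and> (\<forall>u\<in>{0<..<1}. f u > 0) \<and> f' 0 > 0 \<and>
     (\<forall>u\<in>{0<..<1}. f u \<le> f' 0 * u)"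

end

theory Submission
  imports Defs
begin

text \<open>Write \<open>h = (a - b) / 2\<close>, \<open>r = (a + b) / (a - b)\<close> and \<open>q = 1 - f'(0)\<close>; then \<open>k\<close> is uniform
  on \<open>h [r - 1, r + 1]\<close>. Substituting \<open>m = \<lambda> h\<close>, both speeds are governed by the moment generating
  function \<open>M r m = exp (m r) sinh m / m\<close> of the uniform law on \<open>[r - 1, r + 1]\<close>: \<open>c_r = h S r\<close> and
  \<open>c_l = - h S (- r)\<close>, where \<open>S r = inf (M r m - q) / m\<close> over \<open>m > 0\<close>.
  If \<open>q \<le> 0\<close>, then \<open>S > 0\<close> on \<open>(-1, 1]\<close>. If \<open>0 < q < 1\<close>, then \<open>S r \<ge> 0\<close> iff \<open>M r m \<ge> q\<close> for all
  \<open>m > 0\<close>, i.e. iff \<open>r \<ge> t q = sup (ln q - ln (M 0 m)) / m\<close>. This threshold is negative, \<open>S r\<close> has the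
  sign of \<open>r - t q\<close>, and \<open>r\<^sup>* = - t q\<close>. Finally \<open>S r + S (- r) > 0\<close> gives \<open>c_l < c_r\<close>.\<close>

lemma cINF_mult_left:
  fixes f :: "'a \<Rightarrow> real"
  assumes "0 < c" "A \<noteq> {}" "bdd_below (f ` A)"
  shows "(INF x\<in>A. c * f x) = c * (INF x\<in>A. f x)"
  using continuous_at_Inf_mono[of "\<lambda>y. c * y" "f ` A"] assms
  by (simp add: mono_def image_image continuous_intros)

definition unif_mgf :: "real \<Rightarrow> real \<Rightarrow> real" where
  "unif_mgf r m = (exp (m * (1 + r)) - exp (- (m * (1 - r)))) / (2 * m)"

lemma unif_mgf_uminus: "unif_mgf r (- m) = unif_mgf (- r) m"
  unfolding unif_mgf_def by (simp add: algebra_simps diff_divide_distrib)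

lemma unif_mgf_shift: "unif_mgf (r + d) m = exp (m * d) * unif_mgf r m"
  unfolding unif_mgf_def by (simp add: field_simps flip: exp_add)

lemma one_le_unif_mgf_0:
  assumes "m > 0"
  shows "1 \<le> unif_mgf 0 m"
  using real_le_x_sinh[of m] assms by (simp add: unif_mgf_def exp_minus field_simps)

lemma exp_le_unif_mgf:
  assumes "m > 0"
  shows "exp (m * r) \<le> unif_mgf r m"
  using unif_mgf_shift[of 0 r m] one_le_unif_mgf_0[OF assms] by simp

lemma unif_mgf_pos: "m > 0 \<Longrightarrow> 0 < unif_mgf r m"
  using less_le_trans[OF exp_gt_zero exp_le_unif_mgf] .

lemma unif_mgf_mono:
  assumes "r' \<le> r" "m > 0"
  shows "unif_mgf r' m \<le> unif_mgf r m"
proof -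
  have "1 * unif_mgf r' m \<le> exp (m * (r - r')) * unif_mgf r' m"
    using assms unif_mgf_pos[of m r'] by (intro mult_right_mono) auto
  then show ?thesis
    using unif_mgf_shift[of r' "r - r'" m] by simp
qed

lemma unif_mgf_lower_bound:
  assumes "- 1 \<le> r" "r \<le> 1" "m > 0"
  shows "(1 + r) / 2 + m * (1 + r)\<^sup>2 / 4 \<le> unif_mgf r m"
proof -
  have "1 + m * (1 + r) + (m * (1 + r))\<^sup>2 / 2 \<le> exp (m * (1 + r))"
    using assms by (intro exp_lower_Taylor_quadratic) simp
  moreover have "exp (- (m * (1 - r))) \<le> 1"
    using assms by simp
  ultimately have "m * (1 + r) + (m * (1 + r))\<^sup>2 / 2 \<le> exp (m * (1 + r)) - exp (- (m * (1 - r)))"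
    by linarith
  then show ?thesis
    using assms unfolding unif_mgf_def by (simp add: field_simps power2_eq_square)
qed

lemma unif_mgf_ge_of_large:
  assumes "0 < q" "q \<le> 1" "- 1 + q / 2 \<le> r" "12 / q \<le> m"
  shows "q \<le> unif_mgf r m"
proof -
  have m: "m > 0"
    using assms divide_pos_pos[of 12 q] by linarith
  have "q \<le> q / 4 + m * q\<^sup>2 / 16"
    using assms by (simp add: field_simps power2_eq_square)
  also have "\<dots> \<le> unif_mgf (- 1 + q / 2) m"
    using unif_mgf_lower_bound[of "- 1 + q / 2" m] assms m by (simp add: power_divide)
  also have "\<dots> \<le> unif_mgf r m"
    using unif_mgf_mono assms m by blast
  finally show ?thesis .
qed

definition unif_speed :: "real \<Rightarrow> real \<Rightarrow> real" where
  "unif_speed q r = (INF m\<in>{0<..}. (unif_mgf r m - q) / m)"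

lemma unif_speed_quotient_ge:
  assumes "q \<le> 1" "m > 0"
  shows "r \<le> (unif_mgf r m - q) / m"
proof -
  have "1 + m * r \<le> unif_mgf r m"
    using exp_ge_add_one_self[of "m * r"] exp_le_unif_mgf[OF assms(2), of r] by linarith
  then show ?thesis
    using assms by (simp add: field_simps)
qed

lemma bdd_below_unif_speed: "q \<le> 1 \<Longrightarrow> bdd_below ((\<lambda>m. (unif_mgf r m - q) / m) ` {0<..})"
  using unif_speed_quotient_ge by (auto intro!: bdd_belowI2[where m = r])

lemma unif_speed_le: "q \<le> 1 \<Longrightarrow> m > 0 \<Longrightarrow> unif_speed q r \<le> (unif_mgf r m - q) / m"
  unfolding unif_speed_def using bdd_below_unif_speed by (intro cINF_lower) auto

lemma unif_speed_ge: "(\<And>m. m > 0 \<Longrightarrow> c \<le> (unif_mgf r m - q) / m) \<Longrightarrow> c \<le> unif_speed q r"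
  unfolding unif_speed_def by (intro cINF_greatest) auto

lemma unif_speed_ge_self: "q \<le> 1 \<Longrightarrow> r \<le> unif_speed q r"
  using unif_speed_quotient_ge by (intro unif_speed_ge)

lemma unif_speed_pos_of_nonpos:
  assumes "q \<le> 0" "- 1 < r" "r \<le> 1"
  shows "0 < unif_speed q r"
proof -
  have "(1 + r)\<^sup>2 / 4 \<le> (unif_mgf r m - q) / m" if "m > 0" for m
  proof -
    have "m * (1 + r)\<^sup>2 / 4 \<le> (1 + r) / 2 + m * (1 + r)\<^sup>2 / 4"
      using assms by simp
    also have "\<dots> \<le> unif_mgf r m"
      using assms that by (intro unif_mgf_lower_bound) auto
    also have "\<dots> \<le> unif_mgf r m - q"
      using assms by simp
    finally have "m * (1 + r)\<^sup>2 / 4 \<le> unif_mgf r m - q" .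
    then show ?thesis
      using that by (simp add: field_simps)
  qed
  then have "(1 + r)\<^sup>2 / 4 \<le> unif_speed q r"
    by (rule unif_speed_ge)
  moreover have "0 < (1 + r)\<^sup>2 / 4"
    using assms by simp
  ultimately show ?thesis
    by linarith
qed

lemma unif_speed_0_pos:
  assumes "q < 1"
  shows "0 < unif_speed q 0"
proof -
  have "min ((1 - q) / 4) (1 / 8) \<le> (unif_mgf 0 m - q) / m" if m: "m > 0" for m
  proof (cases "m \<le> 4")
    case True
    have "m * (1 - q) \<le> 4 * (1 - q)"
      using True assms by (intro mult_right_mono) auto
    also have "\<dots> \<le> 4 * (unif_mgf 0 m - q)"
      using one_le_unif_mgf_0[OF m] by simp
    finally have "(1 - q) / 4 \<le> (unif_mgf 0 m - q) / m"
      using m by (simp add: field_simps)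
    then show ?thesis
      by linarith
  next
    case False
    have "m / 8 \<le> unif_mgf 0 m - q"
      using unif_mgf_lower_bound[of 0 m] False assms by simp
    then have "1 / 8 \<le> (unif_mgf 0 m - q) / m"
      using m by (simp add: field_simps)
    then show ?thesis
      by linarith
  qed
  then have "min ((1 - q) / 4) (1 / 8) \<le> unif_speed q 0"
    by (rule unif_speed_ge)
  then show ?thesis
    using assms by (simp add: min_def split: if_splits)
qed

lemma unif_speed_ge_add:
  assumes "q \<le> 1" "0 \<le> r"
  shows "r + unif_speed q 0 \<le> unif_speed q r"
proof (rule unif_speed_ge)
  fix m :: real
  assume m: "m > 0"
  have "unif_mgf 0 m + m * r \<le> (1 + m * r) * unif_mgf 0 m"
    using mult_left_mono[OF one_le_unif_mgf_0[OF m], of "m * r"] assms m by (simp add: algebra_simps)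
  also have "\<dots> \<le> unif_mgf r m"
    using unif_mgf_shift[of 0 r m] exp_ge_add_one_self[of "m * r"] unif_mgf_pos[OF m, of 0]
    by (simp add: mult_right_mono)
  finally have "(unif_mgf 0 m + m * r - q) / m \<le> (unif_mgf r m - q) / m"
    using m by (intro divide_right_mono) auto
  moreover have "(unif_mgf 0 m + m * r - q) / m = r + (unif_mgf 0 m - q) / m"
    using m by (simp add: field_simps)
  ultimately show "r + unif_speed q 0 \<le> (unif_mgf r m - q) / m"
    using unif_speed_le[OF assms(1) m, of 0] by linarith
qed

lemma unif_speed_add_reflect_pos:
  assumes "q < 1"
  shows "0 < unif_speed q r + unif_speed q (- r)"
proof -
  have "0 < unif_speed q x + unif_speed q (- x)" if "0 \<le> x" for x
    using unif_speed_ge_add[of q x] unif_speed_ge_self[of q "- x"] unif_speed_0_pos assms that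
    by fastforce
  from this[of r] this[of "- r"] show ?thesis
    by (cases "0 \<le> r") auto
qed

definition unif_threshold :: "real \<Rightarrow> real" where
  "unif_threshold q = (SUP m\<in>{0<..}. (ln q - ln (unif_mgf 0 m)) / m)"

lemma unif_mgf_ge_iff:
  assumes "0 < q" "m > 0"
  shows "q \<le> unif_mgf r m \<longleftrightarrow> (ln q - ln (unif_mgf 0 m)) / m \<le> r"
proof -
  have M: "0 < unif_mgf 0 m"
    using unif_mgf_pos[OF assms(2)] .
  have "q \<le> unif_mgf r m \<longleftrightarrow> ln q \<le> ln (exp (m * r) * unif_mgf 0 m)"
    using unif_mgf_shift[of 0 r m] assms M by simp
  also have "\<dots> \<longleftrightarrow> ln q - ln (unif_mgf 0 m) \<le> m * r"
    using M by (auto simp: ln_mult)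
  also have "\<dots> \<longleftrightarrow> (ln q - ln (unif_mgf 0 m)) / m \<le> r"
    using assms by (simp add: pos_divide_le_eq mult.commute)
  finally show ?thesis .
qed

lemma unif_mgf_ge_near_0:
  assumes "0 < q" "q < 1" "m > 0"
  shows "q \<le> unif_mgf (- (q * (1 - q) / 12)) m"
proof (cases "12 / q \<le> m")
  case True
  have "q * (1 - q) \<le> 1 * 1"
    using assms by (intro mult_mono) auto
  then show ?thesis
    using assms True by (intro unif_mgf_ge_of_large) auto
next
  case False
  have "m * (q * (1 - q) / 12) \<le> 12 / q * (q * (1 - q) / 12)"
    using False assms by (intro mult_right_mono) auto
  then have "q \<le> exp (m * (- (q * (1 - q) / 12)))"
    using exp_ge_add_one_self[of "m * (- (q * (1 - q) / 12))"] assms by simp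
  also have "\<dots> \<le> exp (m * (- (q * (1 - q) / 12))) * unif_mgf 0 m"
    using one_le_unif_mgf_0[OF assms(3)] by simp
  finally show ?thesis
    using unif_mgf_shift[of 0 "- (q * (1 - q) / 12)" m] by simp
qed

lemma bdd_above_unif_threshold:
  assumes "0 < q" "q < 1"
  shows "bdd_above ((\<lambda>m. (ln q - ln (unif_mgf 0 m)) / m) ` {0<..})"
  using unif_mgf_ge_near_0[OF assms] unif_mgf_ge_iff[OF assms(1)]
  by (auto intro!: bdd_aboveI2[where M = "- (q * (1 - q) / 12)"])

lemma unif_threshold_le_iff:
  assumes "0 < q" "q < 1"
  shows "unif_threshold q \<le> r \<longleftrightarrow> (\<forall>m>0. q \<le> unif_mgf r m)"
  unfolding unif_threshold_def
  using cSUP_le_iff[OF _ bdd_above_unif_threshold[OF assms]] unif_mgf_ge_iff[OF assms(1)] by auto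

lemma unif_threshold_neg:
  assumes "0 < q" "q < 1"
  shows "unif_threshold q < 0"
proof -
  have "unif_threshold q \<le> - (q * (1 - q) / 12)"
    using unif_threshold_le_iff[OF assms] unif_mgf_ge_near_0[OF assms] by blast
  moreover have "0 < q * (1 - q)"
    using assms by simp
  ultimately show ?thesis
    by linarith
qed

lemma unif_mgf_at_inverse_lt:
  assumes "0 < q"
  shows "unif_mgf (- 1 + q / 2) (1 / q) < q"
proof -
  have "exp (1 / 2 :: real) \<le> 2"
    using exp_ge_add_one_self[of "- 1 / 2"] by (simp add: exp_minus field_simps)
  moreover have "1 / q * (1 + (- 1 + q / 2)) = 1 / 2"
    using assms by (simp add: field_simps)
  ultimately have "exp (1 / q * (1 + (- 1 + q / 2))) \<le> 2"
    by simp
  moreover have "0 < exp (- (1 / q * (1 - (- 1 + q / 2))))"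
    by simp
  ultimately have "exp (1 / q * (1 + (- 1 + q / 2))) - exp (- (1 / q * (1 - (- 1 + q / 2)))) < 2"
    by linarith
  then have "unif_mgf (- 1 + q / 2) (1 / q) < 2 / (2 * (1 / q))"
    unfolding unif_mgf_def using assms by (intro divide_strict_right_mono) auto
  then show ?thesis
    by simp
qed

lemma unif_threshold_gt:
  assumes "0 < q" "q < 1"
  shows "- 1 + q / 2 < unif_threshold q"
proof -
  have "0 < 1 / q"
    using assms by simp
  then have "\<not> (\<forall>m>0. q \<le> unif_mgf (- 1 + q / 2) m)"
    using unif_mgf_at_inverse_lt[OF assms(1)] not_le by blast
  then have "\<not> unif_threshold q \<le> - 1 + q / 2"
    using unif_threshold_le_iff[OF assms] by blast
  then show ?thesis
    by simp
qed

lemma unif_speed_nonneg_iff: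
  assumes "0 < q" "q < 1"
  shows "0 \<le> unif_speed q r \<longleftrightarrow> unif_threshold q \<le> r"
proof
  assume speed: "0 \<le> unif_speed q r"
  have "q \<le> unif_mgf r m" if "m > 0" for m
    using order_trans[OF speed unif_speed_le[of q m r]] assms that by (simp add: zero_le_divide_iff)
  then show "unif_threshold q \<le> r"
    using unif_threshold_le_iff[OF assms] by blast
next
  assume "unif_threshold q \<le> r"
  then have "q \<le> unif_mgf r m" if "m > 0" for m
    using unif_threshold_le_iff[OF assms] that by blast
  then show "0 \<le> unif_speed q r"
    by (intro unif_speed_ge) simp
qed

lemma unif_speed_pos_of_gt:
  assumes "0 < q" "q < 1" "unif_threshold q < r"
  shows "0 < unif_speed q r"
proof -
  let ?t = "unif_threshold q"
  have "(r - ?t) * q \<le> (unif_mgf r m - q) / m" if m: "m > 0" for m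
  proof -
    have q_le: "q \<le> unif_mgf ?t m"
      using unif_threshold_le_iff[OF assms(1,2)] m by blast
    have "(1 + m * (r - ?t)) * unif_mgf ?t m \<le> unif_mgf r m"
      using unif_mgf_shift[of ?t "r - ?t" m] exp_ge_add_one_self[of "m * (r - ?t)"]
        unif_mgf_pos[OF m, of ?t] by (simp add: mult_right_mono)
    moreover have "m * (r - ?t) * q \<le> m * (r - ?t) * unif_mgf ?t m"
      using q_le m assms by (intro mult_left_mono) auto
    ultimately have "m * ((r - ?t) * q) \<le> unif_mgf r m - q"
      using q_le by (simp add: algebra_simps)
    then show ?thesis
      using m by (simp add: field_simps)
  qed
  then have "(r - ?t) * q \<le> unif_speed q r"
    by (rule unif_speed_ge)
  moreover have "0 < (r - ?t) * q"
    using assms by simp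
  ultimately show ?thesis
    by linarith
qed

lemma unif_speed_threshold_le:
  assumes "0 < q" "q < 1" "0 < d" "d \<le> q / 24" "- 1 + q / 2 \<le> unif_threshold q - d"
  shows "unif_speed q (unif_threshold q) \<le> 2 * q * d"
  \<comment> \<open>Below the threshold some \<open>m\<close> violates \<open>q \<le> unif_mgf\<close>; the last hypothesis keeps this \<open>m\<close>
    below \<open>12 / q\<close>, so shifting back by \<open>d\<close> raises its quotient by at most \<open>2 q d\<close>.\<close>
proof -
  let ?t = "unif_threshold q"
  obtain m where m: "m > 0" "unif_mgf (?t - d) m < q"
    using unif_threshold_le_iff[OF assms(1,2), of "?t - d"] assms(3) by (auto simp: not_le)
  have "m < 12 / q"
    using unif_mgf_ge_of_large[of q "?t - d" m] assms m(2) by fastforce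
  then have "m * d \<le> 12 / q * (q / 24)"
    using assms m by (intro mult_mono) auto
  then have "exp (m * d) \<le> 1 + 2 * (m * d)"
    using exp_bound_lemma[of "m * d"] m assms by simp
  then have "exp (m * d) * unif_mgf (?t - d) m \<le> (1 + 2 * (m * d)) * q"
    using m assms(3) unif_mgf_pos[OF m(1), of "?t - d"] by (intro mult_mono) auto
  then have "(unif_mgf ?t m - q) / m \<le> 2 * q * d"
    using unif_mgf_shift[of "?t - d" d m] m by (simp add: field_simps)
  then show ?thesis
    using unif_speed_le[of q m ?t] assms m by simp
qed

lemma unif_speed_threshold:
  assumes "0 < q" "q < 1"
  shows "unif_speed q (unif_threshold q) = 0"
proof (rule antisym)
  let ?t = "unif_threshold q"
  show "unif_speed q ?t \<le> 0"
  proof (rule field_le_epsilon)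
    fix e :: real
    assume e: "0 < e"
    define d where "d = min (q / 24) (min (e / (2 * q)) (?t - (- 1 + q / 2)))"
    have "0 < d"
      using e assms unif_threshold_gt[OF assms] by (simp add: d_def)
    moreover have "d \<le> q / 24" "d \<le> e / (2 * q)" "d \<le> ?t - (- 1 + q / 2)"
      unfolding d_def by linarith+
    ultimately have "unif_speed q ?t \<le> 2 * q * d" and "2 * q * d \<le> e"
      using assms by (auto intro!: unif_speed_threshold_le) (simp add: field_simps)
    then show "unif_speed q ?t \<le> 0 + e"
      by simp
  qed
  show "0 \<le> unif_speed q ?t"
    using unif_speed_nonneg_iff[OF assms] by simp
qed

lemma sgn_unif_speed:
  assumes "0 < q" "q < 1"
  shows "sgn (unif_speed q r) = sgn (r - unif_threshold q)"
proof (cases rule: linorder_cases[of r "unif_threshold q"])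
  case less
  then show ?thesis
    using unif_speed_nonneg_iff[OF assms, of r] by simp
next
  case equal
  then show ?thesis
    using unif_speed_threshold[OF assms] by simp
next
  case greater
  then show ?thesis
    using unif_speed_pos_of_gt[OF assms greater] by simp
qed

lemma integral_unif_kernel_exp:
  assumes "b < a" "l \<noteq> 0"
  shows "integral UNIV (\<lambda>x. unif_kernel a b x * exp (l * x)) = (exp (l * a) - exp (l * b)) / (l * (a - b))"
proof -
  have d: "((\<lambda>x. exp (l * x) / (l * (a - b))) has_vector_derivative exp (l * x) / (a - b)) (at x within {b..a})" for x
    unfolding has_real_derivative_iff_has_vector_derivative[symmetric]
    using assms by (auto intro!: derivative_eq_intros)
  have "((\<lambda>x. exp (l * x) / (a - b)) has_integral exp (l * a) / (l * (a - b)) - exp (l * b) / (l * (a - b))) {b..a}"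
    using fundamental_theorem_of_calculus[OF _ d] assms by simp
  then have "((\<lambda>x. if x \<in> {b..a} then exp (l * x) / (a - b) else 0) has_integral
      exp (l * a) / (l * (a - b)) - exp (l * b) / (l * (a - b))) UNIV"
    by (simp only: has_integral_restrict_UNIV)
  moreover have "(\<lambda>x. unif_kernel a b x * exp (l * x)) = (\<lambda>x. if x \<in> {b..a} then exp (l * x) / (a - b) else 0)"
    by (auto simp: unif_kernel_def fun_eq_iff)
  ultimately show ?thesis
    by (simp add: integral_unique diff_divide_distrib)
qed

lemma unif_kernel_exp_quotient:
  assumes "b < a" "l \<noteq> 0"
  shows "(integral UNIV (\<lambda>x. unif_kernel a b x * exp (l * x)) - 1 + s) / l
    = (a - b) / 2 * ((unif_mgf ((a + b) / (a - b)) (l * ((a - b) / 2)) - (1 - s)) / (l * ((a - b) / 2)))"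
proof -
  have "l * ((a - b) / 2) * (1 + (a + b) / (a - b)) = l * a"
    and "l * ((a - b) / 2) * (1 - (a + b) / (a - b)) = - (l * b)"
    using assms by (simp_all add: field_simps)
  then have "unif_mgf ((a + b) / (a - b)) (l * ((a - b) / 2)) = (exp (l * a) - exp (l * b)) / (l * (a - b))"
    by (simp add: unif_mgf_def)
  then show ?thesis
    using integral_unif_kernel_exp[OF assms] assms by (simp add: field_simps)
qed

lemma INF_unif_speed_rescale:
  assumes "0 < h" "q \<le> 1"
  shows "(INF l\<in>{0<..}. h * ((unif_mgf r (l * h) - q) / (l * h))) = h * unif_speed q r"
proof -
  have "m \<in> (\<lambda>l. l * h) ` {0<..}" if "m > 0" for m
    using that assms by (intro image_eqI[of _ _ "m / h"]) auto
  then have rescale: "(\<lambda>l. l * h) ` {0<..} = {0<..}"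
    using assms by auto
  have "(INF l\<in>{0<..}. h * ((unif_mgf r (l * h) - q) / (l * h)))
      = (INF m\<in>(\<lambda>l. l * h) ` {0<..}. h * ((unif_mgf r m - q) / m))"
    by (simp only: image_image)
  also have "\<dots> = (INF m\<in>{0<..}. h * ((unif_mgf r m - q) / m))"
    by (simp only: rescale)
  also have "\<dots> = h * unif_speed q r"
    unfolding unif_speed_def using assms bdd_below_unif_speed by (intro cINF_mult_left) auto
  finally show ?thesis .
qed

lemma c_right_unif_kernel:
  assumes "0 < a" "b < 0" "0 \<le> s"
  shows "c_right (unif_kernel a b) s = (a - b) / 2 * unif_speed (1 - s) ((a + b) / (a - b))"
proof -
  let ?h = "(a - b) / 2" and ?r = "(a + b) / (a - b)"
  have "c_right (unif_kernel a b) s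
      = (INF l\<in>{0<..}. (integral UNIV (\<lambda>x. unif_kernel a b x * exp (l * x)) - 1 + s) / l)"
    unfolding c_right_def by (rule arg_cong[where f = Inf]) auto
  also have "\<dots> = (INF l\<in>{0<..}. ?h * ((unif_mgf ?r (l * ?h) - (1 - s)) / (l * ?h)))"
    using unif_kernel_exp_quotient assms by (intro INF_cong) auto
  also have "\<dots> = ?h * unif_speed (1 - s) ?r"
    using assms by (intro INF_unif_speed_rescale) auto
  finally show ?thesis .
qed

lemma c_left_unif_kernel:
  assumes "0 < a" "b < 0" "0 \<le> s"
  shows "c_left (unif_kernel a b) s = - ((a - b) / 2 * unif_speed (1 - s) (- ((a + b) / (a - b))))"
proof -
  let ?h = "(a - b) / 2" and ?r = "(a + b) / (a - b)"
  have neg_image: "{..<0::real} = uminus ` {0<..}"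
    by (auto simp: image_iff intro: bexI[of _ "- x" for x])
  have "c_left (unif_kernel a b) s
      = (SUP l\<in>{..<0}. (integral UNIV (\<lambda>x. unif_kernel a b x * exp (l * x)) - 1 + s) / l)"
    unfolding c_left_def by (rule arg_cong[where f = Sup]) auto
  also have "\<dots> = (SUP l\<in>{0<..}. (integral UNIV (\<lambda>x. unif_kernel a b x * exp (- l * x)) - 1 + s) / - l)"
    by (simp only: neg_image image_image)
  also have "\<dots> = (SUP l\<in>{0<..}. - (?h * ((unif_mgf (- ?r) (l * ?h) - (1 - s)) / (l * ?h))))"
  proof (intro SUP_cong refl)
    fix l :: real
    assume "l \<in> {0<..}"
    then have "(integral UNIV (\<lambda>x. unif_kernel a b x * exp (- l * x)) - 1 + s) / - l
        = ?h * ((unif_mgf ?r (- (l * ?h)) - (1 - s)) / - (l * ?h))"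
      using unif_kernel_exp_quotient[of b a "- l" s] assms by simp
    then show "(integral UNIV (\<lambda>x. unif_kernel a b x * exp (- l * x)) - 1 + s) / - l
        = - (?h * ((unif_mgf (- ?r) (l * ?h) - (1 - s)) / (l * ?h)))"
      by (simp only: unif_mgf_uminus divide_minus_right mult_minus_right)
  qed
  also have "\<dots> = - (INF l\<in>{0<..}. ?h * ((unif_mgf (- ?r) (l * ?h) - (1 - s)) / (l * ?h)))"
    by (simp add: Inf_real_def image_image)
  also have "\<dots> = - (?h * unif_speed (1 - s) (- ?r))"
    using assms by (subst INF_unif_speed_rescale) auto
  finally show ?thesis .
qed

lemma unif_kernel_spreading_speeds_of_ge_1:
  assumes "0 < a" "b < 0" "1 \<le> s"
  shows "c_left (unif_kernel a b) s < 0 \<and> 0 < c_right (unif_kernel a b) s"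
proof -
  have r: "- 1 < (a + b) / (a - b)" "(a + b) / (a - b) < 1"
    using assms by (simp_all add: field_simps)
  then have "0 < unif_speed (1 - s) ((a + b) / (a - b))" "0 < unif_speed (1 - s) (- ((a + b) / (a - b)))"
    using assms by (auto intro!: unif_speed_pos_of_nonpos)
  moreover have "0 < (a - b) / 2"
    using assms by simp
  ultimately have "0 < (a - b) / 2 * unif_speed (1 - s) ((a + b) / (a - b))"
    and "0 < (a - b) / 2 * unif_speed (1 - s) (- ((a + b) / (a - b)))"
    by simp_all
  moreover have s: "0 \<le> s"
    using assms by simp
  ultimately show ?thesis
    unfolding c_left_unif_kernel[OF assms(1,2) s] c_right_unif_kernel[OF assms(1,2) s] by simp
qed

lemma unif_kernel_spreading_speeds_of_lt_1:
  assumes "0 < a" "b < 0" "0 < s" "s < 1"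
  defines "r \<equiv> (a + b) / (a - b)" and "rs \<equiv> - unif_threshold (1 - s)"
    and "cl \<equiv> c_left (unif_kernel a b) s" and "cr \<equiv> c_right (unif_kernel a b) s"
  shows "rs > 0 \<and>
    (r > rs \<longrightarrow> 0 < cl \<and> cl < cr) \<and>
    (r = rs \<longrightarrow> 0 = cl \<and> cl < cr) \<and>
    (- rs < r \<and> r < rs \<longrightarrow> cl < 0 \<and> 0 < cr) \<and>
    (r = - rs \<longrightarrow> cl < cr \<and> cr = 0) \<and>
    (r < - rs \<longrightarrow> cl < cr \<and> cr < 0)"
proof -
  let ?h = "(a - b) / 2" and ?S = "unif_speed (1 - s)"
  have q: "0 < 1 - s" "1 - s < 1"
    using assms by simp_all
  have h: "0 < ?h"
    using assms by simp
  have cr: "cr = ?h * ?S r" and cl: "cl = - (?h * ?S (- r))"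
    using c_right_unif_kernel c_left_unif_kernel assms unfolding cr_def cl_def r_def by simp_all
  have sgn_cr: "sgn cr = sgn (r + rs)" and sgn_cl: "sgn cl = sgn (r - rs)"
    using sgn_unif_speed[OF q, of r] sgn_unif_speed[OF q, of "- r"] h
    unfolding cr cl rs_def by (simp_all add: sgn_mult sgn_minus[symmetric] add.commute)
  have "cr - cl = ?h * (?S r + ?S (- r))"
    unfolding cr cl by (simp add: algebra_simps)
  then have "cl < cr"
    using mult_pos_pos[OF h unif_speed_add_reflect_pos[OF q(2), of r]] by simp
  moreover have "rs > 0"
    using unif_threshold_neg[OF q] unfolding rs_def by simp
  ultimately show ?thesis
    using sgn_cr sgn_cl by (auto simp: sgn_if split: if_splits)
qed

theorem corollary5p4:
  shows "(\<forall>f f' a b. kpp_nonlin f f' \<and> a > 0 \<and> b < 0 \<and> f' 0 \<ge> 1 \<longrightarrow>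
            c_left (unif_kernel a b) (f' 0) < 0 \<and> 0 < c_right (unif_kernel a b) (f' 0))
       \<and> (\<exists>R :: real \<Rightarrow> real. \<forall>f f' a b.
            kpp_nonlin f f' \<and> a > 0 \<and> b < 0 \<and> f' 0 < 1 \<longrightarrow>
            (let r = (a + b) / (a - b); rs = R (f' 0);
                 cl = c_left (unif_kernel a b) (f' 0); cr = c_right (unif_kernel a b) (f' 0) in
             rs > 0 \<and>
             (r > rs \<longrightarrow> 0 < cl \<and> cl < cr) \<and>
             (r = rs \<longrightarrow> 0 = cl \<and> cl < cr) \<and>
             (- rs < r \<and> r < rs \<longrightarrow> cl < 0 \<and> 0 < cr) \<and>
             (r = - rs \<longrightarrow> cl < cr \<and> cr = 0) \<and>
             (r < - rs \<longrightarrow> cl < cr \<and> cr < 0)))"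
  by (rule conjI; intro allI impI exI[of _ "\<lambda>s. - unif_threshold (1 - s)"]; (unfold Let_def)?;
      rule unif_kernel_spreading_speeds_of_ge_1 unif_kernel_spreading_speeds_of_lt_1;
      auto simp: kpp_nonlin_def)

end
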